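(* Let $k\geq 3$ and let $\mathcal{G}$ be a $k$-uniform supertree of order $n$. Then $\rho(\mathcal{G})\leq\rho(\mathcal{S}^{\ast}(n, k))$, with equality if and only if $\mathcal{G}\cong \mathcal{S}^{\ast}(n, k)$.
   Context: A hypergraph $\mathcal{G}=(V,E)$ has a nonempty finite vertex set $V$ and a set $E$ of distinct edges, each edge being a subset of $V$ with at least two vertices; $n=|V|$ is the order and $m=|E|$ the number of edges. It is $k$-uniform if every edge has exactly $k$ vertices. Its adjacency matrix $\mathcal{A}_{\mathcal{G}}$ is the $n\times n$ matrix with $(\mathcal{A}_{\mathcal{G}})_{ij}=\sum_{e\in E,\ i,j\in e}\frac{1}{|e|-1}$ for $i\neq j$ (and $0$ on the diagonal), and the spectral radius $\rho(\mathcal{G})$ is the largest modulus of an eigenvalue of $\mathcal{A}_{\mathcal{G}}$. A hypergraph is connected if any two vertices are joined by a sequence of edges in which consecutive edges intersect. It is acyclic if it contains no (Berge) cycle, i.e. no sequence $v_1e_1v_2e_2\cdots v_qe_qv_1$ with $q\ge 2$, distinct vertices $v_i$, distinct edges $e_i$, and $v_i,v_{i+1}\in e_i$ (indices mod $q$). A supertree is a connected acyclic hypergraph; in particular any two edges of a supertree share at most one vertex, and a $k$-uniform supertree of order $n$ has $\frac{n-1}{k-1}$ edges. The $k$-uniform superstar $\mathcal{S}^{\ast}(n,k)$ of order $n$ is the $k$-uniform supertree in which all edges contain one common vertex (and pairwise meet only in that vertex). Isomorphism of hypergraphs means a vertex bijection mapping edges to edges. *)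

theory Defs
  imports Complex_Main
begin

definition hypergraph :: "'a set \<Rightarrow> 'a set set \<Rightarrow> bool" where
  "hypergraph V E \<longleftrightarrow> finite V \<and> V \<noteq> {} \<and> (\<forall>e\<in>E. e \<subseteq> V \<and> card e \<ge> 2)"

definition uniform :: "nat \<Rightarrow> 'a set set \<Rightarrow> bool" where
  "uniform k E \<longleftrightarrow> (\<forall>e\<in>E. card e = k)"

definition adj :: "'a set set \<Rightarrow> 'a \<Rightarrow> 'a \<Rightarrow> real" where
  "adj E i j = (if i = j then 0
     else (\<Sum>e\<in>{e\<in>E. i \<in> e \<and> j \<in> e}. 1 / (real (card e) - 1)))"

definition hg_eigenvalue :: "'a set \<Rightarrow> 'a set set \<Rightarrow> complex \<Rightarrow> bool" where
  "hg_eigenvalue V E \<mu> \<longleftrightarrow> (\<exists>x :: 'a \<Rightarrow> complex. (\<exists>i\<in>V. x i \<noteq> 0) \<and>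
     (\<forall>i\<in>V. (\<Sum>j\<in>V. complex_of_real (adj E i j) * x j) = \<mu> * x i))"

definition spectral_radius :: "'a set \<Rightarrow> 'a set set \<Rightarrow> real" where
  "spectral_radius V E = Sup {cmod \<mu> | \<mu>. hg_eigenvalue V E \<mu>}"

definition hg_connected :: "'a set \<Rightarrow> 'a set set \<Rightarrow> bool" where
  "hg_connected V E \<longleftrightarrow> (\<forall>u\<in>V. \<forall>v\<in>V. u = v \<or>
     (\<exists>es. es \<noteq> [] \<and> set es \<subseteq> E \<and> u \<in> hd es \<and> v \<in> last es \<and>
        (\<forall>i. Suc i < length es \<longrightarrow> es ! i \<inter> es ! Suc i \<noteq> {})))"

definition has_berge_cycle :: "'a set set \<Rightarrow> bool" where
  "has_berge_cycle E \<longleftrightarrow> (\<exists>q::nat. \<exists>vs :: nat \<Rightarrow> 'a. \<exists>es :: nat \<Rightarrow> 'a set.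
     q \<ge> 2 \<and> inj_on vs {..<q} \<and> inj_on es {..<q} \<and>
     (\<forall>i<q. es i \<in> E \<and> vs i \<in> es i \<and> vs (Suc i mod q) \<in> es i))"

definition supertree :: "'a set \<Rightarrow> 'a set set \<Rightarrow> bool" where
  "supertree V E \<longleftrightarrow> hypergraph V E \<and> hg_connected V E \<and> \<not> has_berge_cycle E"

definition hg_iso :: "'a set \<Rightarrow> 'a set set \<Rightarrow> 'b set \<Rightarrow> 'b set set \<Rightarrow> bool" where
  "hg_iso V E V' E' \<longleftrightarrow> (\<exists>f. bij_betw f V V' \<and> (\<lambda>e. f ` e) ` E = E')"

text \<open>The k-uniform superstar S*(n,k): vertex 0 is the centre, the i-th edge is
  {0} together with the block {i(k-1)+1, ..., (i+1)(k-1)}, for i < (n-1)/(k-1).\<close>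
definition superstar_V :: "nat \<Rightarrow> nat set" where
  "superstar_V n = {0..<n}"

definition superstar_E :: "nat \<Rightarrow> nat \<Rightarrow> nat set set" where
  "superstar_E n k = {insert 0 {i * (k - 1) + 1 ..< (i + 1) * (k - 1) + 1} | i. i < (n - 1) div (k - 1)}"

end

theory Submission
  imports Defs "Jordan_Normal_Form.Char_Poly" "HOL-Computational_Algebra.Fundamental_Theorem_Algebra"
begin

text \<open>
  Let mu be an eigenvalue with eigenvector x, put nu = (k - 1) mu and let v be a vertex where |x|
  is maximal. Applying the eigenvalue equation twice at v gives
    (nu^2 - (k - 2) nu) x_v = (k - 1) d(v) x_v + (sum of x_l over the vertices l at distance 2),
  because in a supertree two edges meet in at most one vertex. For the same reason the vertices
  at distance one and two from v fall into disjoint blocks of k - 1 vertices, one for each edge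
  through v and one for each further edge meeting such an edge; there are at most
  m = (n - 1)/(k - 1) blocks, whence |nu|^2 - (k - 2)|nu| <= (k - 1) m. So (k - 1) rho is at most
  the positive root of t^2 - (k - 2) t = (k - 1) m, and the superstar attains it.

  In the case of equality all m blocks occur around v, and every vertex l at distance two from v
  is again a maximum point of |x|, so all m blocks occur around l as well. If no vertex lies on
  all edges, a path of three edges starts at v or at such an l, and its last edge would be one
  block too many.
\<close>

section \<open>Berge cycles and non-backtracking walks\<close>

lemma minimal_repetition:
  fixes p :: "nat \<Rightarrow> 'b"
  assumes "p 0 = p L" "0 < L" "\<forall>i<L. p i \<noteq> p (Suc i)" "\<forall>i. i + 2 \<le> L \<longrightarrow> p i \<noteq> p (i + 2)"
  shows "\<exists>i j. i < j \<and> j \<le> L \<and> p i = p j \<and> 3 \<le> j - i \<and> inj_on p {i..<j}"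
proof -
  define repeats where "repeats d \<longleftrightarrow> (\<exists>i j. i < j \<and> j \<le> L \<and> p i = p j \<and> j - i = d)" for d
  have "repeats L" unfolding repeats_def using assms by (intro exI[of _ 0] exI[of _ L]) auto
  then have "repeats (LEAST d. repeats d)" by (rule LeastI)
  then obtain i j where ij: "i < j" "j \<le> L" "p i = p j" "j - i = (LEAST d. repeats d)"
    unfolding repeats_def by blast
  have shortest: "j - i \<le> b - a" if "a < b" "b \<le> L" "p a = p b" for a b
    unfolding ij(4) using that by (intro Least_le) (auto simp: repeats_def)
  have "inj_on p {i..<j}"
  proof (rule inj_onI, rule ccontr)
    fix a b assume ab: "a \<in> {i..<j}" "b \<in> {i..<j}" "p a = p b" "a \<noteq> b"
    then show False
      using shortest[of a b] shortest[of b a] ij by (cases "a < b") auto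
  qed
  moreover have "j \<noteq> Suc i" "j \<noteq> i + 2"
    using ij assms(3,4) by auto
  ultimately show ?thesis
    using ij by (intro exI[of _ i] exI[of _ j]) auto
qed

text \<open>Berge cycles are the cycles of length at least four in the bipartite vertex--edge incidence
  graph.\<close>

definition incident :: "'a set set \<Rightarrow> 'a + 'a set \<Rightarrow> 'a + 'a set \<Rightarrow> bool" where
  "incident E x y \<longleftrightarrow>
     (\<exists>v e. e \<in> E \<and> v \<in> e \<and> (x = Inl v \<and> y = Inr e \<or> x = Inr e \<and> y = Inl v))"

lemma periodic_mod:
  fixes c :: "nat \<Rightarrow> 'b"
  assumes "\<forall>t. c (t + d) = c t"
  shows "c t = c (t mod d)"
proof -
  have "c (r + d * m) = c r" for m r
  proof (induction m)
    case (Suc m)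
    then show ?case
      using assms by (metis add.assoc mult_Suc_right add.commute)
  qed simp
  from this[of "t mod d" "t div d"] show ?thesis by simp
qed

lemma inj_on_periodic_window:
  fixes c :: "nat \<Rightarrow> 'b"
  assumes per: "\<forall>t. c (t + d) = c t" and inj: "inj_on c {..<d}"
  shows "inj_on c {m..<m + d}"
proof (rule inj_onI)
  fix a b assume a: "a \<in> {m..<m + d}" and b: "b \<in> {m..<m + d}" and "c a = c b"
  then have "c (a mod d) = c (b mod d)"
    using periodic_mod[OF per] by metis
  moreover have "a mod d < d" "b mod d < d"
    using a by auto
  ultimately have "a mod d = b mod d"
    using inj by (auto dest: inj_onD)
  moreover have "a - b < d" "b - a < d"
    using a b by auto
  ultimately show "a = b"
    by (metis dvd_imp_le le_cases mod_eq_dvd_iff_nat not_less zero_less_diff diff_is_0_eq antisym)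
qed

lemma incidence_cycle_imp_berge_cycle:
  fixes c :: "nat \<Rightarrow> 'a + 'a set"
  assumes walk: "\<forall>t. incident E (c t) (c (Suc t))"
    and per: "\<forall>t. c (t + d) = c t"
    and inj: "inj_on c {..<d}"
    and "3 \<le> d"
  shows "has_berge_cycle E"
proof -
  have alternate: "isl (c (Suc t)) \<longleftrightarrow> \<not> isl (c t)" for t
    using walk[rule_format, of t] unfolding incident_def by auto
  have parity: "isl (c t) \<longleftrightarrow> (isl (c 0) \<longleftrightarrow> even t)" for t
    by (induction t) (auto simp: alternate)
  have "even d"
    using parity[of d] per[rule_format, of 0] by auto
  then obtain q where d: "d = 2 * q"
    by blast
  with \<open>3 \<le> d\<close> have q: "2 \<le> q"
    by presburger
  define s :: nat where "s = (if isl (c 0) then 0 else 1)"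
  have vertex: "isl (c (s + 2 * t))" and edge: "\<not> isl (c (s + 2 * t + 1))" for t
    using parity[of "s + 2 * t"] parity[of "s + 2 * t + 1"] by (auto simp: s_def)
  define vs where "vs t = projl (c (s + 2 * t))" for t
  define es where "es t = projr (c (s + 2 * t + 1))" for t
  have cv: "c (s + 2 * t) = Inl (vs t)" for t
    using vertex[of t] unfolding vs_def by (cases "c (s + 2 * t)") auto
  have ce: "c (s + 2 * t + 1) = Inr (es t)" for t
    using edge[of t] unfolding es_def by (cases "c (s + 2 * t + 1)") auto
  have in_edge: "es t \<in> E \<and> vs t \<in> es t \<and> vs (Suc t) \<in> es t" for t
    using walk[rule_format, of "s + 2 * t"] walk[rule_format, of "s + 2 * t + 1"] cv[of t] ce[of t]
      cv[of "Suc t"] unfolding incident_def by auto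
  have closed: "vs q = vs 0"
    using per[rule_format, of s] cv[of q] cv[of 0] d by simp
  have window: "inj_on c {s..<s + d}"
    by (rule inj_on_periodic_window[OF per inj])
  have inj_shift: "inj_on (\<lambda>t. c (s + 2 * t + r)) {..<q}" if "r \<le> 1" for r
  proof (rule inj_onI)
    fix a b assume "a \<in> {..<q}" "b \<in> {..<q}" "c (s + 2 * a + r) = c (s + 2 * b + r)"
    then show "a = b"
      using inj_onD[OF window, of "s + 2 * a + r" "s + 2 * b + r"] that d by auto
  qed
  have "inj_on vs {..<q}"
    using inj_shift[of 0] by (simp add: cv inj_on_def)
  moreover have "inj_on es {..<q}"
    using inj_shift[of 1] by (simp add: ce[simplified] inj_on_def)
  moreover have "vs (Suc t mod q) \<in> es t" if "t < q" for t
    using in_edge[of t] closed that by (cases "Suc t = q") auto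
  ultimately show ?thesis
    unfolding has_berge_cycle_def using q in_edge
    by (intro exI[of _ q] exI[of _ vs] exI[of _ es]) auto
qed

lemma closed_incidence_walk_imp_berge_cycle:
  fixes p :: "nat \<Rightarrow> 'a + 'a set"
  assumes "p 0 = p L" and "0 < L"
    and walk: "\<forall>i<L. incident E (p i) (p (Suc i))"
    and "\<forall>i. i + 2 \<le> L \<longrightarrow> p i \<noteq> p (i + 2)"
  shows "has_berge_cycle E"
proof -
  have "\<forall>i<L. p i \<noteq> p (Suc i)"
    using walk unfolding incident_def by auto
  then obtain i j where ij: "i < j" "j \<le> L" "p i = p j" "3 \<le> j - i" "inj_on p {i..<j}"
    using minimal_repetition[of p L] assms by auto
  define c where "c t = p (i + t mod (j - i))" for t
  have "incident E (c t) (c (Suc t))" for t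
  proof (cases "Suc (t mod (j - i)) < j - i")
    case True
    then have "Suc t mod (j - i) = Suc (t mod (j - i))"
      by (simp add: mod_Suc)
    then show ?thesis
      using walk[rule_format, of "i + t mod (j - i)"] True ij(2) unfolding c_def by simp
  next
    case False
    moreover have "t mod (j - i) < j - i"
      using ij(1) by simp
    ultimately have "Suc (t mod (j - i)) = j - i"
      by linarith
    then have "i + t mod (j - i) = j - 1" "Suc t mod (j - i) = 0"
      using ij(1) by (auto simp: mod_Suc)
    then show ?thesis
      using walk[rule_format, of "j - 1"] ij(1-3) unfolding c_def by auto
  qed
  moreover have "\<forall>t. c (t + (j - i)) = c t"
    unfolding c_def by simp
  moreover have "inj_on c {..<j - i}"
  proof (rule inj_onI)
    fix a b assume "a \<in> {..<j - i}" "b \<in> {..<j - i}" "c a = c b"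
    then have "p (i + a) = p (i + b)" "i + a \<in> {i..<j}" "i + b \<in> {i..<j}"
      unfolding c_def by auto
    then show "a = b"
      using ij(5) by (auto dest: inj_onD)
  qed
  ultimately show ?thesis
    using incidence_cycle_imp_berge_cycle ij(4) by blast
qed

fun nonbacktracking_walk :: "'a set set \<Rightarrow> 'a list \<Rightarrow> 'a set list \<Rightarrow> bool" where
  "nonbacktracking_walk E [v] [] = True"
| "nonbacktracking_walk E (v # w # vs) (e # es) \<longleftrightarrow>
     e \<in> E \<and> v \<in> e \<and> w \<in> e \<and> v \<noteq> w \<and> (es \<noteq> [] \<longrightarrow> e \<noteq> hd es) \<and>
     nonbacktracking_walk E (w # vs) es"
| "nonbacktracking_walk E _ _ = False"

lemma nonbacktracking_walk_nth:
  "nonbacktracking_walk E vs es \<Longrightarrow> length vs = Suc (length es) \<and>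
    (\<forall>t<length es. es ! t \<in> E \<and> vs ! t \<in> es ! t \<and> vs ! Suc t \<in> es ! t \<and> vs ! t \<noteq> vs ! Suc t) \<and>
    (\<forall>t. Suc t < length es \<longrightarrow> es ! t \<noteq> es ! Suc t)"
proof (induction E vs es rule: nonbacktracking_walk.induct)
  case (2 E v w vs e es)
  have "(e # es) ! t \<noteq> (e # es) ! Suc t" if "Suc t < length (e # es)" for t
    using 2 that by (cases t; cases es) auto
  moreover have "(e # es) ! t \<in> E \<and> (v # w # vs) ! t \<in> (e # es) ! t \<and>
      (v # w # vs) ! Suc t \<in> (e # es) ! t \<and> (v # w # vs) ! t \<noteq> (v # w # vs) ! Suc t"
    if "t < length (e # es)" for t
    using 2 that by (cases t) auto
  ultimately show ?case
    using 2 by simp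
qed auto

lemma closed_nonbacktracking_walk_imp_berge_cycle:
  assumes walk: "nonbacktracking_walk E vs es" and "es \<noteq> []" and closed: "hd vs = last vs"
  shows "has_berge_cycle E"
proof -
  define q where "q = length es"
  obtain len: "length vs = Suc q"
    and step: "\<And>t. t < q \<Longrightarrow> es ! t \<in> E \<and> vs ! t \<in> es ! t \<and> vs ! Suc t \<in> es ! t \<and> vs ! t \<noteq> vs ! Suc t"
    and turn: "\<And>t. Suc t < q \<Longrightarrow> es ! t \<noteq> es ! Suc t"
    using nonbacktracking_walk_nth[OF walk] unfolding q_def by blast
  have "0 < q"
    using \<open>es \<noteq> []\<close> by (simp add: q_def)
  then have "vs ! 0 = vs ! q"
    using closed len by (metis hd_conv_nth last_conv_nth list.size(3) diff_Suc_1 nat.distinct(1))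
  define p where "p i = (if even i then Inl (vs ! (i div 2)) else Inr (es ! (i div 2)))" for i
  have "p 0 = p (2 * q)"
    using \<open>vs ! 0 = vs ! q\<close> by (simp add: p_def)
  moreover have "\<forall>i<2 * q. incident E (p i) (p (Suc i))"
    using step unfolding p_def incident_def by (auto elim!: oddE)
  moreover have "\<forall>i. i + 2 \<le> 2 * q \<longrightarrow> p i \<noteq> p (i + 2)"
  proof (intro allI impI)
    fix i assume "i + 2 \<le> 2 * q"
    then show "p i \<noteq> p (i + 2)"
      using step[of "i div 2"] turn[of "i div 2"] unfolding p_def
      by (cases "even i") (auto elim!: oddE)
  qed
  ultimately show ?thesis
    using closed_incidence_walk_imp_berge_cycle[of p "2 * q"] \<open>0 < q\<close> by simp
qed

lemma no_berge_cycle_if_pairwise_meet_in: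
  assumes "\<And>e e' x. e \<in> E \<Longrightarrow> e' \<in> E \<Longrightarrow> e \<noteq> e' \<Longrightarrow> x \<in> e \<Longrightarrow> x \<in> e' \<Longrightarrow> x = c"
  shows "\<not> has_berge_cycle E"
proof
  assume "has_berge_cycle E"
  then obtain q vs es where q: "2 \<le> q" and "inj_on vs {..<q}" "inj_on es {..<q}"
    and cyc: "\<forall>i<q. es i \<in> E \<and> vs i \<in> es i \<and> vs (Suc i mod q) \<in> es i"
    unfolding has_berge_cycle_def by blast
  then have "vs 0 \<noteq> vs 1" "es 0 \<noteq> es 1" "es (q - 1) \<noteq> es 0"
    by (auto dest: inj_onD)
  have "vs 1 = c"
    using assms[of "es 0" "es 1" "vs 1"] cyc[rule_format, of 0] cyc[rule_format, of 1] q \<open>es 0 \<noteq> es 1\<close>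
    by simp
  moreover have "vs 0 = c"
    using assms[of "es (q - 1)" "es 0" "vs 0"] cyc[rule_format, of "q - 1"] cyc[rule_format, of 0] q
      \<open>es (q - 1) \<noteq> es 0\<close> by simp
  ultimately show False
    using \<open>vs 0 \<noteq> vs 1\<close> by simp
qed

section \<open>The positive root of a quadratic\<close>

definition pos_root :: "real \<Rightarrow> real \<Rightarrow> real" where
  "pos_root b c = (b + sqrt (b * b + 4 * c)) / 2"

lemma pos_root_factor:
  assumes "0 \<le> b * b + 4 * c"
  shows "t * t - b * t - c = (t - pos_root b c) * (t - (b - sqrt (b * b + 4 * c)) / 2)"
proof -
  have "sqrt (b * b + 4 * c) * sqrt (b * b + 4 * c) = b * b + 4 * c"
    using assms by simp
  then show ?thesis
    unfolding pos_root_def by (simp add: field_simps)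
qed

lemma pos_root_eq:
  assumes "0 \<le> b * b + 4 * c"
  shows "pos_root b c * pos_root b c - b * pos_root b c = c"
  using pos_root_factor[OF assms, of "pos_root b c"] by simp

lemma sqrt_discriminant_ge:
  assumes "0 \<le> b" "0 \<le> c"
  shows "b \<le> sqrt (b * b + 4 * c)"
  using assms by (intro real_le_rsqrt) (simp add: power2_eq_square)

lemma pos_root_nonneg: "0 \<le> b \<Longrightarrow> 0 \<le> c \<Longrightarrow> 0 \<le> pos_root b c"
  unfolding pos_root_def by simp

lemma pos_root_gt: "0 \<le> b \<Longrightarrow> 0 < c \<Longrightarrow> b < pos_root b c"
  unfolding pos_root_def using real_less_rsqrt[of b "b * b + 4 * c"] by (simp add: power2_eq_square)

lemma le_pos_root:
  assumes "0 \<le> b" "0 \<le> c" "0 \<le> t" "t * t - b * t \<le> c"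
  shows "t \<le> pos_root b c"
proof (rule ccontr)
  assume "\<not> t \<le> pos_root b c"
  then have "0 < (t - pos_root b c) * (t - (b - sqrt (b * b + 4 * c)) / 2)"
    using assms sqrt_discriminant_ge[OF assms(1,2)]
    by (intro mult_pos_pos) (auto simp: pos_root_def)
  then show False
    using assms pos_root_factor[of b c t] by simp
qed

lemma pos_root_le:
  assumes "0 \<le> b" "0 \<le> c" "pos_root b c \<le> t"
  shows "c \<le> t * t - b * t"
proof -
  have "0 \<le> (t - pos_root b c) * (t - (b - sqrt (b * b + 4 * c)) / 2)"
    using assms sqrt_discriminant_ge[OF assms(1,2)] pos_root_nonneg[OF assms(1,2)]
    by (intro mult_nonneg_nonneg) auto
  then show ?thesis
    using assms pos_root_factor[of b c t] by simp
qed

lemma norm_quadratic_ge: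
  fixes \<nu> :: complex
  assumes "0 \<le> b"
  shows "cmod \<nu> * cmod \<nu> - b * cmod \<nu> \<le> cmod (\<nu> * \<nu> - complex_of_real b * \<nu>)"
  using norm_triangle_ineq2[of "\<nu> * \<nu>" "complex_of_real b * \<nu>"] assms
  by (simp add: norm_mult)

section \<open>Eigenvalues of the adjacency matrix\<close>

definition adj_matrix :: "'a set set \<Rightarrow> (nat \<Rightarrow> 'a) \<Rightarrow> nat \<Rightarrow> complex mat" where
  "adj_matrix E h n = mat n n (\<lambda>(i, j). complex_of_real (adj E (h i) (h j)))"

lemma adj_matrix_mult_vec:
  assumes "bij_betw h {0..<n} V" "i < n"
  shows "(adj_matrix E h n *\<^sub>v vec n (\<lambda>i. x (h i))) $ i = (\<Sum>j\<in>V. complex_of_real (adj E (h i) j) * x j)"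
  using assms sum.reindex_bij_betw[OF assms(1), of "\<lambda>j. complex_of_real (adj E (h i) j) * x j"]
  by (simp add: adj_matrix_def scalar_prod_def atLeast0LessThan)

lemma hg_eigenvalue_imp_eigenvalue:
  assumes h: "bij_betw h {0..<n} V" and "hg_eigenvalue V E \<mu>"
  shows "eigenvalue (adj_matrix E h n) \<mu>"
proof -
  obtain x where x: "\<exists>i\<in>V. x i \<noteq> 0" "\<forall>i\<in>V. (\<Sum>j\<in>V. complex_of_real (adj E i j) * x j) = \<mu> * x i"
    using assms(2) unfolding hg_eigenvalue_def by blast
  define v where "v = vec n (\<lambda>i. x (h i))"
  obtain u where "u \<in> V" "x u \<noteq> 0"
    using x(1) by blast
  then obtain i where "i < n" "h i = u"
    using bij_betw_imp_surj_on[OF h] by force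
  then have "v $ i \<noteq> 0"
    using \<open>x u \<noteq> 0\<close> by (simp add: v_def)
  then have "v \<noteq> 0\<^sub>v n"
    using \<open>i < n\<close> by auto
  moreover have "adj_matrix E h n *\<^sub>v v = \<mu> \<cdot>\<^sub>v v"
    using adj_matrix_mult_vec[OF h] x(2) bij_betw_apply[OF h] unfolding v_def
    by (intro eq_vecI) (auto simp: adj_matrix_def)
  ultimately show ?thesis
    unfolding eigenvalue_def eigenvector_def by (intro exI[of _ v]) (simp add: v_def adj_matrix_def)
qed

lemma eigenvalue_imp_hg_eigenvalue:
  assumes h: "bij_betw h {0..<n} V" and "eigenvalue (adj_matrix E h n) \<mu>"
  shows "hg_eigenvalue V E \<mu>"
proof -
  obtain v where v: "v \<in> carrier_vec n" "v \<noteq> 0\<^sub>v n" "adj_matrix E h n *\<^sub>v v = \<mu> \<cdot>\<^sub>v v"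
    using assms(2) unfolding eigenvalue_def eigenvector_def by (auto simp: adj_matrix_def)
  define x where "x u = v $ inv_into {0..<n} h u" for u
  have hx: "x (h i) = v $ i" if "i < n" for i
    unfolding x_def using h that by (simp add: bij_betw_def inv_into_f_f)
  then have vx: "v = vec n (\<lambda>i. x (h i))"
    using v(1) by auto
  obtain i where "i < n" "v $ i \<noteq> 0"
    using v(1,2) by (metis carrier_vecD eq_vecI index_zero_vec)
  then have "x (h i) \<noteq> 0"
    using hx by simp
  then have "\<exists>u\<in>V. x u \<noteq> 0"
    using bij_betw_apply[OF h] \<open>i < n\<close> by auto
  moreover have "(\<Sum>j\<in>V. complex_of_real (adj E u j) * x j) = \<mu> * x u" if u: "u \<in> V" for u
  proof -
    obtain i where i: "i < n" "h i = u"
      using bij_betw_imp_surj_on[OF h] u by force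
    then have "(\<Sum>j\<in>V. complex_of_real (adj E u j) * x j) = (adj_matrix E h n *\<^sub>v v) $ i"
      using adj_matrix_mult_vec[OF h i(1), where x = x] vx by simp
    also have "\<dots> = \<mu> * x u"
      using v(1,3) i hx[of i] by simp
    finally show ?thesis .
  qed
  ultimately show ?thesis
    unfolding hg_eigenvalue_def by blast
qed

lemma spectral_radius_attained:
  assumes "finite V" "V \<noteq> {}"
  obtains \<mu> where "hg_eigenvalue V E \<mu>" "spectral_radius V E = cmod \<mu>"
proof -
  obtain h where h: "bij_betw h {0..<card V} V"
    using ex_bij_betw_nat_finite[OF assms(1)] by blast
  define A where "A = adj_matrix E h (card V)"
  have A: "A \<in> carrier_mat (card V) (card V)"
    by (simp add: A_def adj_matrix_def)
  have roots: "{\<mu>. hg_eigenvalue V E \<mu>} = {\<mu>. poly (char_poly A) \<mu> = 0}"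
    using hg_eigenvalue_imp_eigenvalue[OF h] eigenvalue_imp_hg_eigenvalue[OF h]
      eigenvalue_root_char_poly[OF A] unfolding A_def by blast
  have "degree (char_poly A) = card V"
    using degree_monic_char_poly[OF A] by blast
  moreover have "0 < card V"
    using assms by (simp add: card_gt_0_iff)
  ultimately have "char_poly A \<noteq> 0" "\<not> constant (poly (char_poly A))"
    by (auto simp: constant_degree)
  then have "finite {\<mu>. hg_eigenvalue V E \<mu>}" "{\<mu>. hg_eigenvalue V E \<mu>} \<noteq> {}"
    unfolding roots using poly_roots_finite fundamental_theorem_of_algebra by auto
  then have "spectral_radius V E \<in> cmod ` {\<mu>. hg_eigenvalue V E \<mu>}"
    unfolding spectral_radius_def by (simp add: setcompr_eq_image cSup_eq_Max)
  then show ?thesis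
    using that by blast
qed

lemma spectral_radius_edgeless:
  assumes "finite V" "V \<noteq> {}"
  shows "spectral_radius V {} = 0"
proof -
  obtain \<mu> where ev: "hg_eigenvalue V {} \<mu>" and radius: "spectral_radius V {} = cmod \<mu>"
    using spectral_radius_attained[OF assms] by blast
  obtain x i where "i \<in> V" "x i \<noteq> 0" "(\<Sum>j\<in>V. complex_of_real (adj {} i j) * x j) = \<mu> * x i"
    using ev unfolding hg_eigenvalue_def by blast
  moreover have "adj {} i j = 0" for j
    by (simp add: adj_def)
  ultimately show ?thesis
    using radius by simp
qed

section \<open>The superstar\<close>

definition superstar_block :: "nat \<Rightarrow> nat \<Rightarrow> nat set" where
  "superstar_block d i = {i * d + 1 ..< i * d + d + 1}"

lemma superstar_E_eq:
  "superstar_E n k = (\<lambda>i. insert 0 (superstar_block (k - 1) i)) ` {..<(n - 1) div (k - 1)}"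
proof -
  have shift: "(i + 1) * d = i * d + d" for i d :: nat
    by simp
  show ?thesis
    unfolding superstar_E_def superstar_block_def shift by blast
qed

lemma finite_superstar_block [simp]: "finite (superstar_block d i)"
  by (simp add: superstar_block_def)

lemma card_superstar_block [simp]: "card (superstar_block d i) = d"
  by (simp add: superstar_block_def)

lemma zero_notin_superstar_block [simp]: "0 \<notin> superstar_block d i"
  by (simp add: superstar_block_def)

lemma superstar_block_index: "x \<in> superstar_block d i \<Longrightarrow> (x - 1) div d = i"
  unfolding superstar_block_def by (intro div_nat_eqI) (auto simp: algebra_simps)

lemma Union_superstar_blocks: "(\<Union>i<m. superstar_block d i) = {1 ..< m * d + 1}"
proof (induction m)
  case (Suc m)
  have "(\<Union>i<Suc m. superstar_block d i) = {1 ..< m * d + 1} \<union> {m * d + 1 ..< m * d + d + 1}"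
    using Suc.IH by (simp add: lessThan_Suc superstar_block_def Un_commute)
  also have "\<dots> = {1 ..< Suc m * d + 1}"
    by (auto simp: algebra_simps)
  finally show ?case .
qed simp

lemma inj_superstar_edge:
  assumes "1 \<le> d"
  shows "inj (\<lambda>i. insert 0 (superstar_block d i))"
proof (rule injI)
  fix i j assume eq: "insert 0 (superstar_block d i) = insert 0 (superstar_block d j)"
  have "i * d + 1 \<in> insert 0 (superstar_block d i)"
    using assms by (simp add: superstar_block_def)
  then have "i * d + 1 \<in> superstar_block d j"
    unfolding eq by simp
  then show "i = j"
    using superstar_block_index[of "i * d + 1" d j] assms by simp
qed

lemma card_superstar_E: "2 \<le> k \<Longrightarrow> card (superstar_E n k) = (n - 1) div (k - 1)"
  unfolding superstar_E_eq
  by (subst card_image) (auto intro: inj_on_subset[OF inj_superstar_edge])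

lemma superstar_centre: "e \<in> superstar_E n k \<Longrightarrow> 0 \<in> e"
  unfolding superstar_E_eq by auto

lemma superstar_vertices:
  assumes "2 \<le> k"
  shows "insert 0 (\<Union>(superstar_E (1 + m * (k - 1)) k)) = superstar_V (1 + m * (k - 1))"
proof -
  have "(m * (k - 1)) div (k - 1) = m"
    using assms by simp
  then have "insert 0 (\<Union>(superstar_E (1 + m * (k - 1)) k)) = insert 0 (\<Union>i<m. superstar_block (k - 1) i)"
    unfolding superstar_E_eq by auto
  also have "\<dots> = superstar_V (1 + m * (k - 1))"
    unfolding Union_superstar_blocks superstar_V_def by auto
  finally show ?thesis .
qed

lemma iso_superstar_imp_centre:
  assumes "hg_iso V E (superstar_V n) (superstar_E n k)" and "\<And>e. e \<in> E \<Longrightarrow> e \<subseteq> V"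
  shows "\<exists>c. \<forall>e\<in>E. c \<in> e"
proof -
  obtain f where f: "bij_betw f V (superstar_V n)" "(\<lambda>e. f ` e) ` E = superstar_E n k"
    using assms(1) unfolding hg_iso_def by blast
  have "inv_into V f 0 \<in> e" if "e \<in> E" for e
  proof -
    have "f ` e \<in> superstar_E n k"
      using f(2) that by blast
    then have "0 \<in> f ` e"
      by (rule superstar_centre)
    then obtain u where "u \<in> e" "f u = 0"
      by (metis imageE)
    moreover have "u \<in> V"
      using assms(2)[OF that] \<open>u \<in> e\<close> by blast
    ultimately show ?thesis
      using bij_betw_inv_into_left[OF f(1)] by metis
  qed
  then show ?thesis
    by blast
qed

text \<open>The spectral radius of the k-uniform superstar with m edges: (k - 1) times it is the
  positive root of t^2 - (k - 2) t = (k - 1) m.\<close>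

definition superstar_radius :: "nat \<Rightarrow> nat \<Rightarrow> real" where
  "superstar_radius k m = pos_root (real k - 2) ((real k - 1) * real m) / (real k - 1)"

section \<open>Uniform hyperforests\<close>

lemma hd_last_adjacent_switch:
  assumes "xs \<noteq> []" "P (hd xs)" "\<not> P (last xs)"
  shows "\<exists>i. Suc i < length xs \<and> P (xs ! i) \<and> \<not> P (xs ! Suc i)"
  using assms
proof (induction xs)
  case (Cons x xs)
  show ?case
  proof (cases "xs = [] \<or> \<not> P (hd xs)")
    case True
    then show ?thesis
      using Cons.prems by (cases xs) (auto intro!: exI[of _ 0])
  next
    case False
    then obtain i where "Suc i < length xs" "P (xs ! i)" "\<not> P (xs ! Suc i)"
      using Cons by auto
    then show ?thesis
      by (intro exI[of _ "Suc i"]) auto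
  qed
qed simp

lemma connected_imp_in_edge:
  assumes "hg_connected V E" "u \<in> V" "w \<in> V" "u \<noteq> w"
  shows "\<exists>e\<in>E. u \<in> e"
proof -
  obtain es where "es \<noteq> []" "set es \<subseteq> E" "u \<in> hd es"
    using assms unfolding hg_connected_def by blast
  then show ?thesis
    by (metis hd_in_set subsetD)
qed

locale uniform_hyperforest =
  fixes V :: "'a set" and E :: "'a set set" and k :: nat
  assumes finite_V: "finite V"
    and edge_subset: "e \<in> E \<Longrightarrow> e \<subseteq> V"
    and card_edge: "e \<in> E \<Longrightarrow> card e = k"
    and two_le_k: "2 \<le> k"
    and acyclic: "\<not> has_berge_cycle E"
begin

lemma no_closed_nonbacktracking_walk: "nonbacktracking_walk E vs es \<Longrightarrow> es \<noteq> [] \<Longrightarrow> hd vs = last vs \<Longrightarrow> False"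
  using closed_nonbacktracking_walk_imp_berge_cycle acyclic by blast

lemma finite_E: "finite E"
  using finite_V edge_subset by (meson Pow_iff finite_Pow_iff rev_finite_subset subsetI)

lemma finite_edge: "e \<in> E \<Longrightarrow> finite e"
  using finite_V edge_subset finite_subset by blast

lemma edges_meet_at_most_once:
  "e \<in> E \<Longrightarrow> f \<in> E \<Longrightarrow> e \<noteq> f \<Longrightarrow> a \<in> e \<Longrightarrow> b \<in> e \<Longrightarrow> a \<in> f \<Longrightarrow> b \<in> f \<Longrightarrow> a = b"
  using no_closed_nonbacktracking_walk[of "[a, b, a]" "[e, f]"] by auto

lemma card_edge_remove: "e \<in> E \<Longrightarrow> u \<in> e \<Longrightarrow> card (e - {u}) = k - 1"
  using card_edge finite_edge by simp

definition edges_at :: "'a \<Rightarrow> 'a set set" where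
  "edges_at v = {e \<in> E. v \<in> e}"

text \<open>A triple (e, j, f) in two_paths v stands for the path v e j f of length two; the sets
  f - {j} partition the vertices at distance two from v.\<close>

definition two_paths :: "'a \<Rightarrow> ('a set \<times> 'a \<times> 'a set) set" where
  "two_paths v = (SIGMA e:edges_at v. SIGMA j:e - {v}. edges_at j - {e})"

definition sphere1 :: "'a \<Rightarrow> 'a set" where
  "sphere1 v = (\<Union>e\<in>edges_at v. e - {v})"

definition sphere2 :: "'a \<Rightarrow> 'a set" where
  "sphere2 v = (\<Union>(e, j, f)\<in>two_paths v. f - {j})"

definition two_step_degree :: "'a \<Rightarrow> nat" where
  "two_step_degree v = card (edges_at v) + card (two_paths v)"

text \<open>A supertree on V has exactly (card V - 1) / (k - 1) edges.\<close>

definition max_edges :: nat where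
  "max_edges = (card V - 1) div (k - 1)"

lemma mem_edges_at [simp]: "e \<in> edges_at v \<longleftrightarrow> e \<in> E \<and> v \<in> e"
  by (simp add: edges_at_def)

lemma mem_two_paths [simp]:
  "(e, j, f) \<in> two_paths v \<longleftrightarrow> e \<in> E \<and> v \<in> e \<and> j \<in> e \<and> j \<noteq> v \<and> f \<in> E \<and> j \<in> f \<and> f \<noteq> e"
  by (auto simp: two_paths_def)

lemma finite_edges_at: "finite (edges_at v)"
  using finite_E by (simp add: edges_at_def)

lemma finite_two_paths: "finite (two_paths v)"
  unfolding two_paths_def using finite_edges_at finite_edge
  by (intro finite_SigmaI) auto

lemma two_path_end_avoids: "(e, j, f) \<in> two_paths v \<Longrightarrow> v \<notin> f"
  using edges_meet_at_most_once[of e f v j] by auto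

lemma sum_sphere1:
  "(\<Sum>l\<in>sphere1 v. g l) = (\<Sum>e\<in>edges_at v. \<Sum>l\<in>e - {v}. g l)"
  unfolding sphere1_def
proof (rule sum.UNION_disjoint)
  show "\<forall>e\<in>edges_at v. \<forall>e'\<in>edges_at v. e \<noteq> e' \<longrightarrow> (e - {v}) \<inter> (e' - {v}) = {}"
    using edges_meet_at_most_once[of _ _ v] unfolding edges_at_def by (simp add: disjoint_iff) blast
qed (use finite_edges_at finite_edge in auto)

lemma two_path_ends_disjoint:
  assumes t: "(e, j, f) \<in> two_paths v" "(e', j', f') \<in> two_paths v"
    and ne: "(e, j, f) \<noteq> (e', j', f')"
  shows "(f - {j}) \<inter> (f' - {j'}) = {}"
proof (rule ccontr)
  assume "(f - {j}) \<inter> (f' - {j'}) \<noteq> {}"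
  then obtain l where l: "l \<in> f - {j}" "l \<in> f' - {j'}"
    by blast
  consider "f \<noteq> f'" | "f = f'" "j \<noteq> j'" | "f = f'" "j = j'" "e \<noteq> e'"
    using ne by blast
  then show False
  proof cases
    case 1
    then show False using no_closed_nonbacktracking_walk[of "[v, j, l, j', v]" "[e, f, f', e']"] t l
      by auto
  next
    case 2
    then show False using no_closed_nonbacktracking_walk[of "[v, j, j', v]" "[e, f, e']"] t l
      by auto
  next
    case 3
    then show False using no_closed_nonbacktracking_walk[of "[v, j, v]" "[e, e']"] t by auto
  qed
qed

lemma sum_sphere2:
  "(\<Sum>l\<in>sphere2 v. g l) = (\<Sum>(e, j, f)\<in>two_paths v. \<Sum>l\<in>f - {j}. g l)"
  unfolding sphere2_def
proof (subst sum.UNION_disjoint)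
  show "\<forall>t\<in>two_paths v. \<forall>t'\<in>two_paths v. t \<noteq> t' \<longrightarrow>
      (case t of (e, j, f) \<Rightarrow> f - {j}) \<inter> (case t' of (e, j, f) \<Rightarrow> f - {j}) = {}"
    using two_path_ends_disjoint by fast
qed (use finite_two_paths finite_edge in \<open>auto intro!: sum.cong\<close>)

lemma finite_sphere1: "finite (sphere1 v)"
  unfolding sphere1_def using finite_edges_at finite_edge by auto

lemma finite_sphere2: "finite (sphere2 v)"
  unfolding sphere2_def using finite_two_paths finite_edge by auto

lemma card_sphere1: "card (sphere1 v) = card (edges_at v) * (k - 1)"
proof -
  have "card (sphere1 v) = (\<Sum>e\<in>edges_at v. card (e - {v}))"
    using sum_sphere1[of "\<lambda>_. 1 :: nat" v] by simp
  also have "\<dots> = (\<Sum>e\<in>edges_at v. k - 1)"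
    by (intro sum.cong) (auto simp: card_edge)
  finally show ?thesis
    by simp
qed

lemma card_sphere2: "card (sphere2 v) = card (two_paths v) * (k - 1)"
proof -
  have "card (sphere2 v) = (\<Sum>(e, j, f)\<in>two_paths v. card (f - {j}))"
    using sum_sphere2[of "\<lambda>_. 1 :: nat" v] by simp
  also have "\<dots> = (\<Sum>t\<in>two_paths v. k - 1)"
    by (intro sum.cong) (auto simp: card_edge)
  finally show ?thesis
    by simp
qed

lemma spheres_disjoint: "sphere1 v \<inter> sphere2 v = {}"
proof -
  have False if "e' \<in> edges_at v" "w \<in> e' - {v}" "(e, j, f) \<in> two_paths v" "w \<in> f - {j}"
    for e' w e j f
    using no_closed_nonbacktracking_walk[of "[v, j, w, v]" "[e, f, e']"] two_path_end_avoids[of e j f v] that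
    by auto
  then show ?thesis
    unfolding sphere1_def sphere2_def by blast
qed

lemma spheres_subset: "sphere1 v \<union> sphere2 v \<subseteq> V - {v}"
proof -
  have end_subset: "f - {j} \<subseteq> V - {v}" if "(e, j, f) \<in> two_paths v" for e j f
  proof -
    have "f \<subseteq> V" "v \<notin> f"
      using two_path_end_avoids[OF that] edge_subset[of f] that by simp_all
    then show ?thesis
      by blast
  qed
  have "sphere2 v \<subseteq> V - {v}"
    unfolding sphere2_def
  proof (rule UN_least)
    fix t assume "t \<in> two_paths v"
    then show "(case t of (e, j, f) \<Rightarrow> f - {j}) \<subseteq> V - {v}"
      using end_subset by (cases t) simp
  qed
  moreover have "sphere1 v \<subseteq> V - {v}"
    unfolding sphere1_def using edge_subset by fastforce
  ultimately show ?thesis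
    by blast
qed

lemma card_spheres: "card (sphere1 v \<union> sphere2 v) = two_step_degree v * (k - 1)"
  unfolding card_Un_disjoint[OF finite_sphere1 finite_sphere2 spheres_disjoint]
    card_sphere1 card_sphere2 two_step_degree_def
  by (rule add_mult_distrib[symmetric])

lemma two_step_degree_le:
  assumes "v \<in> V"
  shows "two_step_degree v \<le> max_edges"
proof -
  have "two_step_degree v * (k - 1) \<le> card (V - {v})"
    unfolding card_spheres[symmetric] using finite_V spheres_subset by (intro card_mono) auto
  then show ?thesis
    using assms finite_V two_le_k by (simp add: max_edges_def less_eq_div_iff_mult_less_eq)
qed

text \<open>An edge g at distance three from u brings k - 1 vertices outside both spheres of u.\<close>

lemma two_step_degree_less:
  assumes a: "(a, j, b) \<in> two_paths u" and b: "(b, j', g) \<in> two_paths j"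
  shows "two_step_degree u < max_edges"
proof -
  have "u \<notin> b"
    using a two_path_end_avoids by blast
  have "u \<notin> g"
    using no_closed_nonbacktracking_walk[of "[u, j, j', u]" "[a, b, g]"] a b \<open>u \<notin> b\<close>
    by auto
  define G where "G = g - {j'}"
  have "G \<inter> sphere1 u = {}"
  proof -
    have False if "w \<in> G" "c \<in> edges_at u" "w \<in> c - {u}" for w c
      using no_closed_nonbacktracking_walk[of "[u, j, j', w, u]" "[a, b, g, c]"] a b that \<open>u \<notin> g\<close>
      unfolding G_def by auto
    then show ?thesis
      unfolding sphere1_def by blast
  qed
  moreover have "G \<inter> sphere2 u = {}"
  proof -
    have False if w: "w \<in> G" "w \<in> f - {j2}" and t: "(c, j2, f) \<in> two_paths u" for w c j2 f
    proof -
      consider "f \<noteq> g" | "f = g" "j2 = j'" | "f = g" "j2 \<noteq> j'"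
        by blast
      then show False
      proof cases
        case 1
        then show False
          using no_closed_nonbacktracking_walk[of "[u, j, j', w, j2, u]" "[a, b, g, f, c]"] a b t w
          unfolding G_def by auto
      next
        case 2
        then show False
          using no_closed_nonbacktracking_walk[of "[u, j, j', u]" "[a, b, c]"] a b t \<open>u \<notin> b\<close>
          by auto
      next
        case 3
        then show False
          using no_closed_nonbacktracking_walk[of "[u, j, j', j2, u]" "[a, b, g, c]"] a b t \<open>u \<notin> g\<close>
          by auto
      qed
    qed
    then show ?thesis
      unfolding sphere2_def by blast
  qed
  moreover have "G \<subseteq> V - {u}" "finite G" "card G = k - 1"
    using edge_subset[of g] b \<open>u \<notin> g\<close> finite_edge card_edge_remove unfolding G_def
    by auto
  ultimately have "card (sphere1 u \<union> sphere2 u \<union> G) = card (sphere1 u \<union> sphere2 u) + card G"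
    using finite_sphere1 finite_sphere2 by (intro card_Un_disjoint) auto
  then have "(two_step_degree u + 1) * (k - 1) = card (sphere1 u \<union> sphere2 u \<union> G)"
    by (simp add: card_spheres \<open>card G = k - 1\<close>)
  also have "\<dots> \<le> card (V - {u})"
    using finite_V spheres_subset \<open>G \<subseteq> V - {u}\<close> by (intro card_mono) auto
  also have "\<dots> = card V - 1"
    using a edge_subset[of a] finite_V by (simp add: subset_iff)
  finally have "two_step_degree u + 1 \<le> max_edges"
    unfolding max_edges_def using two_le_k by (subst less_eq_div_iff_mult_less_eq) auto
  then show ?thesis
    by simp
qed

lemma two_paths_nonempty:
  assumes conn: "hg_connected V E" and "u \<in> V" "g \<in> E" "u \<notin> g"
  shows "two_paths u \<noteq> {}"
proof -
  have "card g \<noteq> 0"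
    using card_edge[OF \<open>g \<in> E\<close>] two_le_k by simp
  then obtain w where "w \<in> g"
    by fastforce
  then have "w \<in> V" "w \<noteq> u"
    using edge_subset \<open>g \<in> E\<close> \<open>u \<notin> g\<close> by auto
  then obtain es where es: "es \<noteq> []" "set es \<subseteq> E" "u \<in> hd es" "w \<in> last es"
      "\<forall>i. Suc i < length es \<longrightarrow> es ! i \<inter> es ! Suc i \<noteq> {}"
    using conn \<open>u \<in> V\<close> unfolding hg_connected_def by metis
  show ?thesis
  proof (cases "u \<in> last es")
    case True
    then have "(last es, w, g) \<in> two_paths u"
      using es \<open>w \<in> g\<close> \<open>w \<noteq> u\<close> \<open>g \<in> E\<close> \<open>u \<notin> g\<close>
      by auto
    then show ?thesis
      by blast
  next
    case False
    then obtain i where i: "Suc i < length es" "u \<in> es ! i" "u \<notin> es ! Suc i"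
      using hd_last_adjacent_switch[of es "\<lambda>e. u \<in> e"] es by blast
    then obtain j where "j \<in> es ! i" "j \<in> es ! Suc i"
      using es(5) by blast
    moreover have "es ! i \<in> E" "es ! Suc i \<in> E"
      using i(1) es(2) by (auto dest: nth_mem)
    ultimately have "(es ! i, j, es ! Suc i) \<in> two_paths u"
      using i by auto
    then show ?thesis
      by blast
  qed
qed

lemma connected_windmill_card:
  assumes conn: "hg_connected V E" and "c \<in> V" and centre: "\<forall>e\<in>E. c \<in> e"
  shows "card V = 1 + card E * (k - 1)"
proof -
  have "edges_at c = E"
    using centre by (auto simp: edges_at_def)
  have "V \<subseteq> insert c (sphere1 c)"
  proof
    fix u assume "u \<in> V"
    show "u \<in> insert c (sphere1 c)"
    proof (cases "u = c")
      case False
      then obtain e where "e \<in> E" "u \<in> e"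
        using connected_imp_in_edge[OF conn \<open>u \<in> V\<close> \<open>c \<in> V\<close>]
        by blast
      then show ?thesis
        using centre False unfolding sphere1_def by auto
    qed simp
  qed
  then have "V = insert c (sphere1 c)"
    using spheres_subset[of c] \<open>c \<in> V\<close> by blast
  moreover have "c \<notin> sphere1 c"
    unfolding sphere1_def by simp
  ultimately show ?thesis
    using finite_sphere1 card_sphere1[of c] \<open>edges_at c = E\<close> by simp
qed

definition nbr_sum :: "('a \<Rightarrow> complex) \<Rightarrow> 'a \<Rightarrow> complex" where
  "nbr_sum x i = (\<Sum>e\<in>edges_at i. \<Sum>j\<in>e - {i}. x j)"

lemma adj_eq_sum: "adj E i j = (\<Sum>e\<in>edges_at i. if j \<in> e - {i} then 1 / (real k - 1) else 0)"
proof (cases "i = j")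
  case False
  have "{e \<in> E. i \<in> e \<and> j \<in> e} = {e \<in> edges_at i. j \<in> e}"
    by auto
  then have "adj E i j = (\<Sum>e\<in>{e \<in> edges_at i. j \<in> e}. 1 / (real k - 1))"
    using False card_edge by (simp add: adj_def)
  also have "\<dots> = (\<Sum>e\<in>edges_at i. if j \<in> e then 1 / (real k - 1) else 0)"
    using finite_edges_at by (rule sum.inter_filter)
  finally show ?thesis
    using False by simp
qed (simp add: adj_def)

lemma adj_mult_eq:
  assumes "i \<in> V"
  shows "(\<Sum>j\<in>V. complex_of_real (adj E i j) * x j) = nbr_sum x i / (of_nat k - 1)"
proof -
  have "complex_of_real (adj E i j) * x j =
      (\<Sum>e\<in>edges_at i. if j \<in> e - {i} then x j / (of_nat k - 1) else 0)" for j
    unfolding adj_eq_sum of_real_sum sum_distrib_right by (intro sum.cong) auto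
  then have "(\<Sum>j\<in>V. complex_of_real (adj E i j) * x j) =
      (\<Sum>e\<in>edges_at i. \<Sum>j\<in>V. if j \<in> e - {i} then x j / (of_nat k - 1) else 0)"
    by (simp add: sum.swap[of _ V])
  also have "\<dots> = (\<Sum>e\<in>edges_at i. \<Sum>j\<in>e - {i}. x j / (of_nat k - 1))"
  proof (rule sum.cong[OF refl])
    fix e assume "e \<in> edges_at i"
    then have filter: "{j \<in> V. j \<in> e - {i}} = e - {i}"
      using edge_subset by auto
    show "(\<Sum>j\<in>V. if j \<in> e - {i} then x j / (of_nat k - 1) else 0) =
        (\<Sum>j\<in>e - {i}. x j / (of_nat k - 1))"
      unfolding sum.inter_filter[OF finite_V, symmetric] filter ..
  qed
  finally show ?thesis
    by (simp add: nbr_sum_def sum_divide_distrib)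
qed

lemma hg_eigenvalue_iff:
  "hg_eigenvalue V E \<mu> \<longleftrightarrow>
    (\<exists>x. (\<exists>i\<in>V. x i \<noteq> 0) \<and> (\<forall>i\<in>V. nbr_sum x i = (of_nat k - 1) * \<mu> * x i))"
proof -
  have "(of_nat k - 1 :: complex) \<noteq> 0"
    using two_le_k by (simp add: of_nat_diff[symmetric])
  then have eq: "(\<Sum>j\<in>V. complex_of_real (adj E i j) * x j) = \<mu> * x i \<longleftrightarrow>
      nbr_sum x i = (of_nat k - 1) * \<mu> * x i" if "i \<in> V" for x i
    unfolding adj_mult_eq[OF that] by (subst nonzero_divide_eq_eq) (auto simp: ac_simps)
  show ?thesis
    unfolding hg_eigenvalue_def by (simp add: eq cong: ball_cong)
qed

lemma sum_two_paths:
  "(\<Sum>(e, j, f)\<in>two_paths v. g e j f) = (\<Sum>e\<in>edges_at v. \<Sum>j\<in>e - {v}. \<Sum>f\<in>edges_at j - {e}. g e j f)"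
proof -
  have "(\<Sum>(e, j, f)\<in>two_paths v. g e j f) =
      (\<Sum>e\<in>edges_at v. \<Sum>(j, f)\<in>(SIGMA j:e - {v}. edges_at j - {e}). g e j f)"
    unfolding two_paths_def using finite_edges_at finite_edge
    by (subst sum.Sigma) (auto intro!: finite_SigmaI)
  also have "\<dots> = (\<Sum>e\<in>edges_at v. \<Sum>j\<in>e - {v}. \<Sum>f\<in>edges_at j - {e}. g e j f)"
    using finite_edges_at finite_edge by (intro sum.cong refl, subst sum.Sigma) auto
  finally show ?thesis .
qed

text \<open>Applying the eigenvalue equation twice at v: the vertices of an edge at v other than v
  contribute (k - 2) times the first application and k - 1 copies of x v; the rest is the
  distance-two sphere.\<close>

lemma nbr_sum_twice:
  assumes ev: "\<forall>i\<in>V. nbr_sum x i = \<nu> * x i" and "v \<in> V"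
  shows "\<nu> * \<nu> * x v - (of_nat k - 2) * \<nu> * x v =
    (of_nat k - 1) * of_nat (card (edges_at v)) * x v + (\<Sum>l\<in>sphere2 v. x l)"
proof -
  have second: "\<nu> * x j = (\<Sum>l\<in>e - {j}. x l) + (\<Sum>f\<in>edges_at j - {e}. \<Sum>l\<in>f - {j}. x l)"
    if "e \<in> edges_at v" "j \<in> e - {v}" for e j
  proof -
    have "j \<in> V" "e \<in> edges_at j"
      using that edge_subset by auto
    have "nbr_sum x j = (\<Sum>l\<in>e - {j}. x l) + (\<Sum>f\<in>edges_at j - {e}. \<Sum>l\<in>f - {j}. x l)"
      unfolding nbr_sum_def
      by (rule sum.remove[OF finite_edges_at \<open>e \<in> edges_at j\<close>])
    then show ?thesis
      using ev \<open>j \<in> V\<close> by simp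
  qed
  have inner: "(\<Sum>j\<in>e - {v}. \<Sum>l\<in>e - {j}. x l) = (of_nat k - 2) * (\<Sum>j\<in>e - {v}. x j) + (of_nat k - 1) * x v"
    if "e \<in> edges_at v" for e
  proof -
    have e: "e \<in> E" "v \<in> e" "finite e"
      using that finite_edge by auto
    have "(\<Sum>l\<in>e - {j}. x l) = sum x e - x j" if "j \<in> e" for j
      using e(3) that by (simp add: sum_diff1)
    then have "(\<Sum>j\<in>e - {v}. \<Sum>l\<in>e - {j}. x l) = of_nat (card (e - {v})) * sum x e - (\<Sum>j\<in>e - {v}. x j)"
      by (simp add: sum_subtractf)
    moreover have "sum x e = x v + (\<Sum>j\<in>e - {v}. x j)"
      using e by (simp add: sum.remove)
    moreover have "of_nat (card (e - {v})) = (of_nat k - 1 :: complex)"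
      using card_edge_remove[OF e(1,2)] two_le_k by (simp add: of_nat_diff)
    ultimately show ?thesis
      by (simp add: algebra_simps)
  qed
  have "\<nu> * \<nu> * x v = \<nu> * nbr_sum x v"
    using ev \<open>v \<in> V\<close> by simp
  also have "\<dots> = (\<Sum>e\<in>edges_at v. \<Sum>j\<in>e - {v}. \<nu> * x j)"
    by (simp add: nbr_sum_def sum_distrib_left)
  also have "\<dots> = (\<Sum>e\<in>edges_at v. (of_nat k - 2) * (\<Sum>j\<in>e - {v}. x j) + (of_nat k - 1) * x v +
      (\<Sum>j\<in>e - {v}. \<Sum>f\<in>edges_at j - {e}. \<Sum>l\<in>f - {j}. x l))"
    using second inner by (simp add: sum.distrib)
  also have "\<dots> = (of_nat k - 2) * nbr_sum x v + of_nat (card (edges_at v)) * ((of_nat k - 1) * x v) +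
      (\<Sum>l\<in>sphere2 v. x l)"
    by (simp add: sum.distrib sum_distrib_left nbr_sum_def sum_sphere2 sum_two_paths)
  finally show ?thesis
    using ev \<open>v \<in> V\<close> by (simp add: algebra_simps)
qed

lemma norm_k_minus_one: "cmod (of_nat k - 1 :: complex) = real k - 1"
  using two_le_k norm_of_real[of "real k - 1"] by simp

lemma eigenvector_estimate:
  assumes ev: "\<forall>i\<in>V. nbr_sum x i = \<nu> * x i" and "v \<in> V"
    and max: "\<forall>u\<in>V. cmod (x u) \<le> cmod (x v)"
  shows "cmod (\<nu> * \<nu> - (of_nat k - 2) * \<nu>) * cmod (x v) + (\<Sum>l\<in>sphere2 v. cmod (x v) - cmod (x l))
    \<le> (real k - 1) * real (two_step_degree v) * cmod (x v)"
proof -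
  define M where "M = cmod (x v)"
  have "cmod (\<nu> * \<nu> - (of_nat k - 2) * \<nu>) * M =
      cmod ((of_nat k - 1) * of_nat (card (edges_at v)) * x v + (\<Sum>l\<in>sphere2 v. x l))"
    unfolding M_def nbr_sum_twice[OF ev \<open>v \<in> V\<close>, symmetric]
    by (simp add: norm_mult[symmetric] algebra_simps)
  also have "\<dots> \<le> (real k - 1) * real (card (edges_at v)) * M + (\<Sum>l\<in>sphere2 v. cmod (x l))"
    using norm_triangle_ineq[of "(of_nat k - 1) * of_nat (card (edges_at v)) * x v" "\<Sum>l\<in>sphere2 v. x l"]
      norm_sum[of x "sphere2 v"] by (simp add: norm_mult norm_k_minus_one M_def)
  also have "(\<Sum>l\<in>sphere2 v. cmod (x l)) = real (card (sphere2 v)) * M - (\<Sum>l\<in>sphere2 v. M - cmod (x l))"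
    by (simp add: sum_subtractf)
  finally show ?thesis
    using two_le_k by (simp add: card_sphere2 two_step_degree_def M_def algebra_simps of_nat_diff)
qed

lemma eigenvector_bound:
  assumes ev: "\<forall>i\<in>V. nbr_sum x i = \<nu> * x i" and "v \<in> V"
    and max: "\<forall>u\<in>V. cmod (x u) \<le> cmod (x v)" and "x v \<noteq> 0"
  shows "cmod (\<nu> * \<nu> - (of_nat k - 2) * \<nu>) \<le> (real k - 1) * real (two_step_degree v)"
proof -
  have "0 \<le> (\<Sum>l\<in>sphere2 v. cmod (x v) - cmod (x l))"
    using max spheres_subset by (intro sum_nonneg) auto
  then have "cmod (\<nu> * \<nu> - (of_nat k - 2) * \<nu>) * cmod (x v) \<le> (real k - 1) * real (two_step_degree v) * cmod (x v)"
    using eigenvector_estimate[OF ev \<open>v \<in> V\<close> max] by linarith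
  then show ?thesis
    using \<open>x v \<noteq> 0\<close> by simp
qed

lemma eigenvector_sphere2_extremal:
  assumes ev: "\<forall>i\<in>V. nbr_sum x i = \<nu> * x i" and "v \<in> V"
    and max: "\<forall>u\<in>V. cmod (x u) \<le> cmod (x v)"
    and tight: "(real k - 1) * real (two_step_degree v) \<le> cmod (\<nu> * \<nu> - (of_nat k - 2) * \<nu>)"
    and "l \<in> sphere2 v"
  shows "cmod (x l) = cmod (x v)"
proof -
  have nonneg: "\<forall>l\<in>sphere2 v. 0 \<le> cmod (x v) - cmod (x l)"
    using max spheres_subset by auto
  have "(real k - 1) * real (two_step_degree v) * cmod (x v) \<le> cmod (\<nu> * \<nu> - (of_nat k - 2) * \<nu>) * cmod (x v)"
    using tight by (simp add: mult_right_mono)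
  moreover have "0 \<le> (\<Sum>l\<in>sphere2 v. cmod (x v) - cmod (x l))"
    using nonneg by (intro sum_nonneg) auto
  ultimately have "(\<Sum>l\<in>sphere2 v. cmod (x v) - cmod (x l)) = 0"
    using eigenvector_estimate[OF ev \<open>v \<in> V\<close> max] by linarith
  then have "cmod (x v) - cmod (x l) = 0"
    using sum_nonneg_eq_0_iff[OF finite_sphere2, where f = "\<lambda>l. cmod (x v) - cmod (x l)"] nonneg
      \<open>l \<in> sphere2 v\<close> by blast
  then show ?thesis
    by simp
qed

lemma hg_eigenvalue_maximal_vertex:
  assumes "hg_eigenvalue V E \<mu>"
  obtains x v where "\<forall>i\<in>V. nbr_sum x i = (of_nat k - 1) * \<mu> * x i"
    and "v \<in> V" "x v \<noteq> 0" "\<forall>u\<in>V. cmod (x u) \<le> cmod (x v)"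
proof -
  obtain x where x: "\<exists>i\<in>V. x i \<noteq> 0" "\<forall>i\<in>V. nbr_sum x i = (of_nat k - 1) * \<mu> * x i"
    using assms hg_eigenvalue_iff by blast
  then have "(\<lambda>u. cmod (x u)) ` V \<noteq> {}"
    by blast
  then obtain v where v: "v \<in> V" "cmod (x v) = Max ((\<lambda>u. cmod (x u)) ` V)"
    using Max_in[OF finite_imageI[OF finite_V]] by (metis (no_types, lifting) imageE)
  then have max: "\<forall>u\<in>V. cmod (x u) \<le> cmod (x v)"
    using finite_V by simp
  obtain i where "i \<in> V" "x i \<noteq> 0"
    using x(1) by blast
  then have "0 < cmod (x v)"
    using max by (meson less_le_trans zero_less_norm_iff)
  then show ?thesis
    using that x(2) v(1) max by simp
qed

lemma exists_two_step_degree_less: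
  assumes conn: "hg_connected V E" and no_centre: "\<not> (\<exists>c. \<forall>e\<in>E. c \<in> e)" and "v \<in> V"
  obtains u where "u \<in> insert v (sphere2 v)" "two_step_degree u < max_edges"
proof -
  have avoiding_edge: "\<exists>g\<in>E. c \<notin> g" for c
    using no_centre by blast
  obtain g where "g \<in> E" "v \<notin> g"
    using avoiding_edge by blast
  then obtain e j f where t: "(e, j, f) \<in> two_paths v"
    using two_paths_nonempty[OF conn \<open>v \<in> V\<close>] by (metis ex_in_conv prod_cases3)
  then have "card (f - {j}) \<noteq> 0"
    using card_edge_remove[of f j] two_le_k by simp
  then obtain l where l: "l \<in> f - {j}"
    by (metis card.empty ex_in_conv)
  have "l \<in> sphere2 v"
    unfolding sphere2_def by (rule UN_I[OF t]) (use l in simp)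
  have "j \<in> V"
    using t edge_subset by auto
  obtain g' where "g' \<in> E" "j \<notin> g'"
    using avoiding_edge by blast
  then obtain e' j' f' where t': "(e', j', f') \<in> two_paths j"
    using two_paths_nonempty[OF conn \<open>j \<in> V\<close>] by (metis ex_in_conv prod_cases3)
  show ?thesis
  proof (cases "e' = e")
    case True
    have "(f, j, e) \<in> two_paths l"
      using t l by (auto simp: eq_commute[of e f])
    then have "two_step_degree l < max_edges"
      using t' unfolding True by (rule two_step_degree_less)
    then show ?thesis
      using that \<open>l \<in> sphere2 v\<close> by blast
  next
    case False
    then have "(e, j, e') \<in> two_paths v"
      using t t' by (simp add: eq_commute[of e' e])
    then have "two_step_degree v < max_edges"
      using t' by (rule two_step_degree_less)
    then show ?thesis
      using that by blast
  qed
qed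

lemma norm_k_minus_one_mult: "cmod ((of_nat k - 1) * \<mu>) = (real k - 1) * cmod \<mu>"
  by (simp add: norm_mult norm_k_minus_one)

lemma eigenvalue_norm_le:
  assumes "hg_eigenvalue V E \<mu>"
  shows "cmod \<mu> \<le> superstar_radius k max_edges"
proof -
  obtain x v where ev: "\<forall>i\<in>V. nbr_sum x i = (of_nat k - 1) * \<mu> * x i"
    and v: "v \<in> V" "x v \<noteq> 0" "\<forall>u\<in>V. cmod (x u) \<le> cmod (x v)"
    using hg_eigenvalue_maximal_vertex[OF assms] by blast
  define \<nu> where "\<nu> = (of_nat k - 1) * \<mu>"
  have ev': "\<forall>i\<in>V. nbr_sum x i = \<nu> * x i"
    using ev by (simp add: \<nu>_def)
  have "cmod \<nu> * cmod \<nu> - (real k - 2) * cmod \<nu> \<le> cmod (\<nu> * \<nu> - (of_nat k - 2) * \<nu>)"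
    using norm_quadratic_ge[of "real k - 2" \<nu>] two_le_k by simp
  also have "\<dots> \<le> (real k - 1) * real (two_step_degree v)"
    by (rule eigenvector_bound[OF ev' v(1,3,2)])
  also have "\<dots> \<le> (real k - 1) * real max_edges"
    using two_step_degree_le[OF v(1)] two_le_k by (intro mult_left_mono) auto
  finally have "cmod \<nu> \<le> pos_root (real k - 2) ((real k - 1) * real max_edges)"
    using two_le_k by (intro le_pos_root) auto
  then show ?thesis
    using two_le_k unfolding \<nu>_def norm_k_minus_one_mult superstar_radius_def
    by (simp add: field_simps)
qed

lemma eigenvalue_norm_less:
  assumes conn: "hg_connected V E" and no_centre: "\<not> (\<exists>c. \<forall>e\<in>E. c \<in> e)"
    and "hg_eigenvalue V E \<mu>"
  shows "cmod \<mu> < superstar_radius k max_edges"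
proof (rule ccontr)
  assume "\<not> cmod \<mu> < superstar_radius k max_edges"
  obtain x v where ev: "\<forall>i\<in>V. nbr_sum x i = (of_nat k - 1) * \<mu> * x i"
    and v: "v \<in> V" "x v \<noteq> 0" "\<forall>u\<in>V. cmod (x u) \<le> cmod (x v)"
    using hg_eigenvalue_maximal_vertex[OF \<open>hg_eigenvalue V E \<mu>\<close>] by blast
  define \<nu> where "\<nu> = (of_nat k - 1) * \<mu>"
  have ev': "\<forall>i\<in>V. nbr_sum x i = \<nu> * x i"
    using ev by (simp add: \<nu>_def)
  have "pos_root (real k - 2) ((real k - 1) * real max_edges) \<le> cmod \<nu>"
    using \<open>\<not> cmod \<mu> < _\<close> two_le_k unfolding \<nu>_def norm_k_minus_one_mult superstar_radius_def
    by (simp add: field_simps)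
  then have "(real k - 1) * real max_edges \<le> cmod \<nu> * cmod \<nu> - (real k - 2) * cmod \<nu>"
    using two_le_k by (intro pos_root_le) auto
  also have "\<dots> \<le> cmod (\<nu> * \<nu> - (of_nat k - 2) * \<nu>)"
    using norm_quadratic_ge[of "real k - 2" \<nu>] two_le_k by simp
  finally have tight: "(real k - 1) * real max_edges \<le> cmod (\<nu> * \<nu> - (of_nat k - 2) * \<nu>)" .
  have extremal: "two_step_degree u = max_edges \<and> (\<forall>l\<in>sphere2 u. l \<in> V \<and> cmod (x l) = cmod (x v))"
    if u: "u \<in> V" "cmod (x u) = cmod (x v)" for u
  proof -
    have max_u: "\<forall>w\<in>V. cmod (x w) \<le> cmod (x u)"
      using u v(3) by simp
    have "x u \<noteq> 0"
      using u v(2) by auto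
    then have "cmod (\<nu> * \<nu> - (of_nat k - 2) * \<nu>) \<le> (real k - 1) * real (two_step_degree u)"
      by (rule eigenvector_bound[OF ev' u(1) max_u])
    with tight have "(real k - 1) * real max_edges \<le> (real k - 1) * real (two_step_degree u)"
      by linarith
    then have "real max_edges \<le> real (two_step_degree u)"
      using two_le_k by (subst (asm) mult_le_cancel_left_pos) auto
    then have "max_edges \<le> two_step_degree u"
      by simp
    then have "two_step_degree u = max_edges"
      using two_step_degree_le[OF u(1)] by simp
    moreover have "cmod (x l) = cmod (x u)" if "l \<in> sphere2 u" for l
      using eigenvector_sphere2_extremal[OF ev' u(1) max_u _ that] tight
        \<open>two_step_degree u = max_edges\<close> by simp
    moreover have "sphere2 u \<subseteq> V"
      using spheres_subset[of u] by blast
    ultimately show ?thesis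
      using u(2) by (simp add: subset_iff)
  qed
  obtain u where u: "u \<in> insert v (sphere2 v)" "two_step_degree u < max_edges"
    using exists_two_step_degree_less[OF conn no_centre v(1)] .
  have "u \<in> V \<and> cmod (x u) = cmod (x v)"
  proof (cases "u = v")
    case False
    then show ?thesis
      using u(1) extremal[OF v(1) refl] by blast
  qed (use v(1) in simp)
  then show False
    using extremal[of u] u(2) by simp
qed

lemma windmill_edges_at:
  assumes centre: "\<forall>e\<in>E. c \<in> e" and "e \<in> E" "i \<in> e" "i \<noteq> c"
  shows "edges_at i = {e}"
proof -
  have "f = e" if "f \<in> E" "i \<in> f" for f
    using that assms edges_meet_at_most_once[of f e c i] by blast
  then show ?thesis
    using \<open>e \<in> E\<close> \<open>i \<in> e\<close> unfolding edges_at_def by blast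
qed

definition windmill_vector :: "'a \<Rightarrow> real \<Rightarrow> 'a \<Rightarrow> complex" where
  "windmill_vector c r u =
    (if u = c then complex_of_real (r - (real k - 2)) else if \<exists>e\<in>E. u \<in> e then 1 else 0)"

lemma windmill_nbr_sum:
  assumes centre: "\<forall>e\<in>E. c \<in> e" and r: "r * (r - (real k - 2)) = (real k - 1) * real (card E)"
  shows "nbr_sum (windmill_vector c r) i = complex_of_real r * windmill_vector c r i"
proof -
  let ?x = "windmill_vector c r"
  consider "i = c" | e where "e \<in> E" "i \<in> e" "i \<noteq> c" | "i \<noteq> c" "\<forall>e\<in>E. i \<notin> e"
    by blast
  then show ?thesis
  proof cases
    case 1
    have "edges_at c = E"
      using centre by auto
    have "(\<Sum>j\<in>e - {c}. ?x j) = of_nat (k - 1)" if "e \<in> E" for e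
    proof -
      have "(\<Sum>j\<in>e - {c}. ?x j) = (\<Sum>j\<in>e - {c}. 1)"
        using that by (intro sum.cong) (auto simp: windmill_vector_def)
      then show ?thesis
        using card_edge_remove[OF that centre[rule_format, OF that]] by simp
    qed
    then have "nbr_sum ?x c = of_nat (card E * (k - 1))"
      unfolding nbr_sum_def \<open>edges_at c = E\<close> by simp
    also have "\<dots> = complex_of_real (r * (r - (real k - 2)))"
      unfolding r using two_le_k by (simp add: of_nat_diff)
    finally show ?thesis
      using 1 by (simp add: windmill_vector_def)
  next
    case (2 e)
    have "c \<in> e - {i}" "finite e"
      using 2 centre finite_edge by auto
    then have "nbr_sum ?x i = ?x c + (\<Sum>j\<in>e - {i} - {c}. ?x j)"
      unfolding nbr_sum_def windmill_edges_at[OF centre 2] by (simp add: sum.remove)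
    also have "(\<Sum>j\<in>e - {i} - {c}. ?x j) = (\<Sum>j\<in>e - {i} - {c}. 1)"
      using 2 by (intro sum.cong) (auto simp: windmill_vector_def)
    also have "(\<Sum>j\<in>e - {i} - {c}. 1) = (of_nat (k - 2) :: complex)"
      using card_edge_remove[OF 2(1,2)] \<open>c \<in> e - {i}\<close> \<open>finite e\<close> by simp
    also have "?x c = complex_of_real (r - (real k - 2))"
      by (simp add: windmill_vector_def)
    moreover have "?x i = 1"
      using 2 by (auto simp: windmill_vector_def)
    ultimately show ?thesis
      using two_le_k by (simp add: of_nat_diff)
  next
    case 3
    then have "edges_at i = {}"
      by auto
    then show ?thesis
      using 3 by (simp add: nbr_sum_def windmill_vector_def)
  qed
qed

lemma windmill_eigenvalue:
  assumes "c \<in> V" and centre: "\<forall>e\<in>E. c \<in> e" and "E \<noteq> {}"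
  shows "hg_eigenvalue V E (complex_of_real (superstar_radius k (card E)))"
proof -
  define r where "r = pos_root (real k - 2) ((real k - 1) * real (card E))"
  have "0 < card E"
    using \<open>E \<noteq> {}\<close> finite_E by (simp add: card_gt_0_iff)
  then have "real k - 2 < r"
    unfolding r_def using two_le_k by (intro pos_root_gt) auto
  have "0 \<le> (real k - 2) * (real k - 2) + 4 * ((real k - 1) * real (card E))"
    using two_le_k by simp
  from pos_root_eq[OF this] have "r * (r - (real k - 2)) = (real k - 1) * real (card E)"
    unfolding r_def[symmetric] by (simp add: algebra_simps)
  then have "\<forall>i\<in>V. nbr_sum (windmill_vector c r) i = complex_of_real r * windmill_vector c r i"
    using windmill_nbr_sum[OF centre] by blast
  moreover have "windmill_vector c r c \<noteq> 0"
    unfolding windmill_vector_def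
    by (simp only: if_True refl of_real_eq_0_iff) (use \<open>real k - 2 < r\<close> in linarith)
  moreover have "(of_nat k - 1) * complex_of_real (superstar_radius k (card E)) = complex_of_real r"
    using two_le_k by (simp add: superstar_radius_def r_def of_nat_diff)
  ultimately show ?thesis
    unfolding hg_eigenvalue_iff using \<open>c \<in> V\<close> by auto
qed

lemma superstar_radius_nonneg: "0 \<le> superstar_radius k m"
  unfolding superstar_radius_def using two_le_k by (simp add: pos_root_nonneg)

lemma windmill_spectral_radius:
  assumes "c \<in> V" "\<forall>e\<in>E. c \<in> e" "E \<noteq> {}" "card E = max_edges"
  shows "spectral_radius V E = superstar_radius k max_edges"
  unfolding spectral_radius_def
proof (rule cSup_eq_maximum)
  have "cmod (complex_of_real (superstar_radius k max_edges)) = superstar_radius k max_edges"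
    using superstar_radius_nonneg by simp
  then show "superstar_radius k max_edges \<in> {cmod \<mu> |\<mu>. hg_eigenvalue V E \<mu>}"
    using windmill_eigenvalue[OF assms(1-3)] assms(4) by (metis (mono_tags, lifting) mem_Collect_eq)
qed (use eigenvalue_norm_le in blast)

lemma spectral_radius_less:
  assumes "V \<noteq> {}" "hg_connected V E" "\<not> (\<exists>c. \<forall>e\<in>E. c \<in> e)"
  shows "spectral_radius V E < superstar_radius k max_edges"
  using spectral_radius_attained[OF finite_V assms(1)] eigenvalue_norm_less[OF assms(2,3)] by metis

lemma windmill_relabelling:
  assumes centre: "\<forall>e\<in>E. c \<in> e" and \<phi>: "bij_betw \<phi> {..<m} E"
  obtains f where "f c = 0" "\<And>i. i < m \<Longrightarrow> f ` \<phi> i = insert 0 (superstar_block (k - 1) i)"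
proof -
  have edge: "\<phi> i \<in> E" if "i < m" for i
    using bij_betw_apply[OF \<phi>] that by simp
  have "\<forall>i\<in>{..<m}. \<exists>\<psi>. bij_betw \<psi> (\<phi> i - {c}) (superstar_block (k - 1) i)"
  proof
    fix i assume "i \<in> {..<m}"
    then have "\<phi> i \<in> E" "c \<in> \<phi> i"
      using edge centre by auto
    then show "\<exists>\<psi>. bij_betw \<psi> (\<phi> i - {c}) (superstar_block (k - 1) i)"
      by (intro finite_same_card_bij) (simp_all add: finite_edge card_edge)
  qed
  then obtain \<psi> where \<psi>: "\<forall>i\<in>{..<m}. bij_betw (\<psi> i) (\<phi> i - {c}) (superstar_block (k - 1) i)"
    using bchoice by metis
  have index: "(THE i. i < m \<and> u \<in> \<phi> i) = i" if i: "i < m" "u \<in> \<phi> i" "u \<noteq> c" for i u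
  proof (rule the_equality)
    fix j assume j: "j < m \<and> u \<in> \<phi> j"
    show "j = i"
    proof (rule ccontr)
      assume "j \<noteq> i"
      then have "\<phi> j \<noteq> \<phi> i"
        using i j bij_betw_imp_inj_on[OF \<phi>] by (auto dest: inj_onD)
      then show False
        using edges_meet_at_most_once[of "\<phi> j" "\<phi> i" c u] edge i j centre by auto
    qed
  qed (use i in simp)
  define f where "f u = (if u = c then 0 else \<psi> (THE i. i < m \<and> u \<in> \<phi> i) u)" for u
  have "f ` \<phi> i = insert 0 (superstar_block (k - 1) i)" if "i < m" for i
  proof -
    have "\<phi> i = insert c (\<phi> i - {c})"
      using centre edge[OF that] by blast
    then have "f ` \<phi> i = insert (f c) (f ` (\<phi> i - {c}))"
      by (metis image_insert)
    also have "f ` (\<phi> i - {c}) = \<psi> i ` (\<phi> i - {c})"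
      using index[OF that] by (intro image_cong) (auto simp: f_def)
    also have "\<dots> = superstar_block (k - 1) i"
      using \<psi> that by (simp add: bij_betw_def)
    finally show ?thesis
      by (simp add: f_def)
  qed
  moreover have "f c = 0"
    by (simp add: f_def)
  ultimately show ?thesis
    using that by blast
qed

lemma connected_windmill_iso_superstar:
  assumes conn: "hg_connected V E" and "c \<in> V" and centre: "\<forall>e\<in>E. c \<in> e"
  shows "hg_iso V E (superstar_V (card V)) (superstar_E (card V) k)"
proof -
  define m where "m = card E"
  have card_V: "card V = 1 + m * (k - 1)"
    unfolding m_def by (rule connected_windmill_card[OF assms])
  obtain \<phi> where \<phi>: "bij_betw \<phi> {..<m} E"
    using ex_bij_betw_nat_finite[OF finite_E] by (auto simp: m_def atLeast0LessThan)
  obtain f where "f c = 0" and f: "\<And>i. i < m \<Longrightarrow> f ` \<phi> i = insert 0 (superstar_block (k - 1) i)"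
    using windmill_relabelling[OF centre \<phi>] by blast
  have "(card V - 1) div (k - 1) = m"
    using card_V two_le_k by simp
  then have edges: "(\<lambda>e. f ` e) ` E = superstar_E (card V) k"
    unfolding superstar_E_eq bij_betw_imp_surj_on[OF \<phi>, symmetric] image_image using f by simp
  have "V = insert c (\<Union>E)"
    using connected_imp_in_edge[OF conn _ \<open>c \<in> V\<close>] edge_subset \<open>c \<in> V\<close>
    by blast
  then have "f ` V = insert 0 (\<Union>(superstar_E (card V) k))"
    unfolding edges[symmetric] using \<open>f c = 0\<close> by auto
  also have "\<dots> = superstar_V (card V)"
    unfolding card_V using superstar_vertices[OF two_le_k] .
  finally have "bij_betw f V (superstar_V (card V))"
    using finite_V by (simp add: bij_betw_def eq_card_imp_inj_on superstar_V_def)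
  then show ?thesis
    unfolding hg_iso_def using edges by blast
qed

lemma max_edges_pos:
  assumes "E \<noteq> {}"
  shows "0 < max_edges"
proof -
  obtain e where "e \<in> E"
    using assms by blast
  then have "k \<le> card V"
    using card_edge[of e] card_mono[OF finite_V edge_subset] by metis
  then show ?thesis
    using two_le_k by (simp add: max_edges_def div_greater_zero_iff)
qed

end

lemma superstar_uniform_hyperforest:
  assumes "2 \<le> k"
  shows "uniform_hyperforest (superstar_V n) (superstar_E n k) k"
proof
  fix e assume "e \<in> superstar_E n k"
  then obtain i where i: "i < (n - 1) div (k - 1)" and e: "e = insert 0 (superstar_block (k - 1) i)"
    unfolding superstar_E_eq by blast
  have "(i + 1) * (k - 1) \<le> (n - 1) div (k - 1) * (k - 1)"
    using i by (intro mult_right_mono) auto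
  also have "\<dots> \<le> n - 1"
    by simp
  finally have "i * (k - 1) + (k - 1) + 1 \<le> n"
    using i by (cases n) auto
  then show "e \<subseteq> superstar_V n"
    unfolding e superstar_V_def superstar_block_def by auto
  show "card e = k"
    using assms unfolding e by simp
next
  have "x = 0" if edges: "e \<in> superstar_E n k" "e' \<in> superstar_E n k"
    and "e \<noteq> e'" "x \<in> e" "x \<in> e'" for e e' x
  proof -
    obtain i j where ij: "e = insert 0 (superstar_block (k - 1) i)" "e' = insert 0 (superstar_block (k - 1) j)"
      using edges unfolding superstar_E_eq by blast
    then have "i \<noteq> j"
      using that(3) by blast
    then show ?thesis
      using ij that(4,5) superstar_block_index[of x "k - 1"] by auto
  qed
  then show "\<not> has_berge_cycle (superstar_E n k)"
    by (rule no_berge_cycle_if_pairwise_meet_in)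
qed (use assms in \<open>simp_all add: superstar_V_def\<close>)

lemma superstar_spectral_radius:
  assumes "2 \<le> k" "0 < (n - 1) div (k - 1)"
  shows "spectral_radius (superstar_V n) (superstar_E n k) = superstar_radius k ((n - 1) div (k - 1))"
proof -
  interpret S: uniform_hyperforest "superstar_V n" "superstar_E n k" k
    using superstar_uniform_hyperforest assms(1) .
  have "S.max_edges = (n - 1) div (k - 1)" "card (superstar_E n k) = (n - 1) div (k - 1)"
    unfolding S.max_edges_def using card_superstar_E[OF assms(1)] by (simp_all add: superstar_V_def)
  moreover have "superstar_E n k \<noteq> {}"
    using calculation(2) assms(2) by auto
  moreover have "(0 :: nat) \<in> superstar_V n"
    using assms(2) by (cases n) (auto simp: superstar_V_def)
  ultimately show ?thesis
    using S.windmill_spectral_radius[of 0] superstar_centre by simp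
qed

lemma supertree_uniform_hyperforest:
  assumes "supertree V E" "uniform k E" "2 \<le> k"
  shows "uniform_hyperforest V E k"
proof
  show "finite V" "\<not> has_berge_cycle E"
    using assms(1) unfolding supertree_def hypergraph_def by blast+
  show "e \<subseteq> V" if "e \<in> E" for e
    using assms(1) that unfolding supertree_def hypergraph_def by blast
  show "card e = k" if "e \<in> E" for e
    using assms(2) that unfolding uniform_def by blast
qed (rule assms(3))

lemma connected_edgeless_superstar:
  assumes "hg_connected V {}" "finite V" "V \<noteq> {}"
  shows "spectral_radius V {} = spectral_radius (superstar_V (card V)) (superstar_E (card V) k)"
    and "hg_iso V {} (superstar_V (card V)) (superstar_E (card V) k)"
proof -
  obtain c where "c \<in> V"
    using assms(3) by blast
  then have V: "V = {c}"
    using connected_imp_in_edge[OF assms(1) _ \<open>c \<in> V\<close>] by blast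
  then have "card V = 1"
    by simp
  then have star: "superstar_V (card V) = {0}" "superstar_E (card V) k = {}"
    unfolding superstar_V_def superstar_E_def by auto
  then show "spectral_radius V {} = spectral_radius (superstar_V (card V)) (superstar_E (card V) k)"
    using spectral_radius_edgeless[of V] spectral_radius_edgeless[of "{0 :: nat}"] assms(2,3)
    by simp
  show "hg_iso V {} (superstar_V (card V)) (superstar_E (card V) k)"
    unfolding star hg_iso_def using V by (intro exI[of _ "\<lambda>_. 0"]) (simp add: bij_betw_def)
qed

theorem theorem1p1:
  fixes V :: "'a set" and E :: "'a set set" and k n :: nat
  assumes "k \<ge> 3"
    and "supertree V E"
    and "uniform k E"
    and "card V = n"
  shows "spectral_radius V E \<le> spectral_radius (superstar_V n) (superstar_E n k) \<and>
    (spectral_radius V E = spectral_radius (superstar_V n) (superstar_E n k)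
      \<longleftrightarrow> hg_iso V E (superstar_V n) (superstar_E n k))"
proof -
  have conn: "hg_connected V E" and "finite V" "V \<noteq> {}"
    using assms(2) unfolding supertree_def hypergraph_def by blast+
  interpret G: uniform_hyperforest V E k
    using supertree_uniform_hyperforest[OF assms(2,3)] assms(1) by simp
  show ?thesis
  proof (cases "E = {}")
    case True
    then show ?thesis
      using connected_edgeless_superstar[of V k] conn \<open>finite V\<close> \<open>V \<noteq> {}\<close> assms(4)
      by simp
  next
    case False
    have "G.max_edges = (n - 1) div (k - 1)"
      using assms(4) by (simp add: G.max_edges_def)
    then have radius_S: "spectral_radius (superstar_V n) (superstar_E n k) = superstar_radius k G.max_edges"
      using superstar_spectral_radius G.max_edges_pos[OF False] assms(1) by simp
    show ?thesis
    proof (cases "\<exists>c. \<forall>e\<in>E. c \<in> e")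
      case True
      then obtain c where c: "c \<in> V" "\<forall>e\<in>E. c \<in> e"
        using False G.edge_subset by blast
      then have "card E = G.max_edges"
        using G.connected_windmill_card[OF conn] G.two_le_k by (simp add: G.max_edges_def)
      then show ?thesis
        using G.windmill_spectral_radius[OF c False] G.connected_windmill_iso_superstar[OF conn c]
          radius_S assms(4) by simp
    next
      case False
      then have "\<not> hg_iso V E (superstar_V n) (superstar_E n k)"
        using iso_superstar_imp_centre G.edge_subset by blast
      then show ?thesis
        using G.spectral_radius_less[OF \<open>V \<noteq> {}\<close> conn False] radius_S by simp
    qed
  qed
qed

end
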